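(* Let $V\subset\mathbb{R}^4$ be the (central) hypersurface with equation $x^8=(z_1^2+z_2^2)y^8$ in coordinates $(x,y,z_1,z_2)$. Then the ring $\mathcal{R}^0(V)$ of continuous rational functions on $V$ does not have the substitution property over $\mathbb{R}[V]$ along algebraic Puiseux arcs.
   Context: $\mathcal{R}^0(V)$: continuous (Euclidean) functions $V\to\mathbb{R}$ whose restriction to some non-empty Zariski open subset of $V$ is regular. $\mathbb{R}[[t^*]]_{\mathrm{alg}}$: Puiseux series $\sum_{i\ge0}a_it^{i/m}$ of non-negative order which are algebraic over $\mathbb{R}[t]$. Substitution along algebraic Puiseux arcs means: every $\mathbb{R}$-algebra homomorphism $\mathbb{R}[V]\to\mathbb{R}[[t^*]]_{\mathrm{alg}}$ admits one and only one extension to a homomorphism $\mathcal{R}^0(V)\to\mathbb{R}[[t^*]]_{\mathrm{alg}}$. *)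

theory Defs
  imports "HOL-Analysis.Analysis" "HOL-Computational_Algebra.Polynomial"
begin

type_synonym pt4 = "real \<times> real \<times> real \<times> real"

definition poly4 :: "(pt4 \<Rightarrow> real) \<Rightarrow> bool" where
  "poly4 f \<longleftrightarrow> (\<exists>(c :: nat \<times> nat \<times> nat \<times> nat \<Rightarrow> real) S. finite S \<and>
      (\<forall>x y z w. f (x, y, z, w) =
         (\<Sum>(i, j, k, l)\<in>S. c (i, j, k, l) * x ^ i * y ^ j * z ^ k * w ^ l)))"

definition zariski_open_in :: "pt4 set \<Rightarrow> pt4 set \<Rightarrow> bool" where
  "zariski_open_in V U \<longleftrightarrow>
     (\<exists>P. (\<forall>p\<in>P. poly4 p) \<and> U = V - {x. \<forall>p\<in>P. p x = 0})"

text \<open>Elements of rings of functions on V are represented by functions on R^4 that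
  vanish outside V (so equality of functions on V is equality in HOL).\<close>
definition coord_ring :: "pt4 set \<Rightarrow> (pt4 \<Rightarrow> real) set" where
  "coord_ring V = {f. (\<forall>x. x \<notin> V \<longrightarrow> f x = 0) \<and> (\<exists>p. poly4 p \<and> (\<forall>x\<in>V. f x = p x))}"

definition cont_rat :: "pt4 set \<Rightarrow> (pt4 \<Rightarrow> real) set" where
  "cont_rat V = {f. (\<forall>x. x \<notin> V \<longrightarrow> f x = 0) \<and> continuous_on V f \<and>
      (\<exists>U p q. zariski_open_in V U \<and> U \<noteq> {} \<and> poly4 p \<and> poly4 q \<and>
          (\<forall>x\<in>U. q x \<noteq> 0 \<and> f x = p x / q x))}"

definition fconst :: "pt4 set \<Rightarrow> real \<Rightarrow> pt4 \<Rightarrow> real" where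
  "fconst V c = (\<lambda>x. if x \<in> V then c else 0)"

definition is_puiseux :: "(rat \<Rightarrow> real) \<Rightarrow> bool" where
  "is_puiseux s \<longleftrightarrow> (\<exists>m::nat. m > 0 \<and>
      (\<forall>q. s q \<noteq> 0 \<longrightarrow> q \<ge> 0 \<and> (\<exists>k::nat. q = of_nat k / of_nat m)))"

definition ps_add :: "(rat \<Rightarrow> real) \<Rightarrow> (rat \<Rightarrow> real) \<Rightarrow> rat \<Rightarrow> real" where
  "ps_add f g = (\<lambda>q. f q + g q)"

definition ps_mult :: "(rat \<Rightarrow> real) \<Rightarrow> (rat \<Rightarrow> real) \<Rightarrow> rat \<Rightarrow> real" where
  "ps_mult f g = (\<lambda>q. \<Sum>a\<in>{a. f a \<noteq> 0 \<and> g (q - a) \<noteq> 0}. f a * g (q - a))"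

definition ps_const :: "real \<Rightarrow> rat \<Rightarrow> real" where
  "ps_const c = (\<lambda>q. if q = 0 then c else 0)"

fun ps_pow :: "(rat \<Rightarrow> real) \<Rightarrow> nat \<Rightarrow> rat \<Rightarrow> real" where
  "ps_pow s 0 = ps_const 1"
| "ps_pow s (Suc n) = ps_mult s (ps_pow s n)"

definition ps_of_poly :: "real poly \<Rightarrow> rat \<Rightarrow> real" where
  "ps_of_poly p = (\<lambda>q. if (\<exists>k::nat. q = of_nat k) then coeff p (nat \<lfloor>q\<rfloor>) else 0)"

definition ps_eval :: "real poly poly \<Rightarrow> (rat \<Rightarrow> real) \<Rightarrow> rat \<Rightarrow> real" where
  "ps_eval P s = (\<lambda>q. \<Sum>i\<le>degree P. ps_mult (ps_of_poly (coeff P i)) (ps_pow s i) q)"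

definition alg_puiseux :: "(rat \<Rightarrow> real) set" where
  "alg_puiseux = {s. is_puiseux s \<and> (\<exists>P. P \<noteq> 0 \<and> ps_eval P s = (\<lambda>_. 0))}"

definition alg_hom_into_ps :: "pt4 set \<Rightarrow> (pt4 \<Rightarrow> real) set \<Rightarrow> ((pt4 \<Rightarrow> real) \<Rightarrow> rat \<Rightarrow> real) \<Rightarrow> bool" where
  "alg_hom_into_ps V A h \<longleftrightarrow>
     (\<forall>f\<in>A. h f \<in> alg_puiseux) \<and>
     (\<forall>f\<in>A. \<forall>g\<in>A. h (\<lambda>x. f x + g x) = ps_add (h f) (h g)) \<and>
     (\<forall>f\<in>A. \<forall>g\<in>A. h (\<lambda>x. f x * g x) = ps_mult (h f) (h g)) \<and>
     (\<forall>c. h (fconst V c) = ps_const c)"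

definition substitution_property :: "pt4 set \<Rightarrow> bool" where
  "substitution_property V \<longleftrightarrow>
     (\<forall>\<phi>. alg_hom_into_ps V (coord_ring V) \<phi> \<longrightarrow>
        (\<exists>\<psi>. alg_hom_into_ps V (cont_rat V) \<psi> \<and> (\<forall>f\<in>coord_ring V. \<psi> f = \<phi> f)) \<and>
        (\<forall>\<psi>1 \<psi>2. alg_hom_into_ps V (cont_rat V) \<psi>1 \<and> (\<forall>f\<in>coord_ring V. \<psi>1 f = \<phi> f) \<and>
                  alg_hom_into_ps V (cont_rat V) \<psi>2 \<and> (\<forall>f\<in>coord_ring V. \<psi>2 f = \<phi> f)
                  \<longrightarrow> (\<forall>f\<in>cont_rat V. \<psi>1 f = \<psi>2 f)))"

definition V_ex :: "pt4 set" where
  "V_ex = {(x, y, z1, z2). x ^ 8 = (z1 ^ 2 + z2 ^ 2) * y ^ 8}"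

end

theory Submission
  imports Defs "HOL-Computational_Algebra.Polynomial_FPS"
begin

text \<open>Along the arc \<open>t \<mapsto> (0, 0, t\<^sup>2, 0)\<close> in the singular line of \<open>V\<close>, every continuous
  rational function agrees for small \<open>t > 0\<close> with a rational function of \<open>t\<close> that is regular at 0.
  To see this, parametrise a dense subset of \<open>V\<close> by \<open>(l, w, y)\<close> so that \<open>y = 0\<close> maps onto the
  arc \<open>w \<mapsto> (0, 0, w\<^sup>4, 0)\<close>. A rational function of \<open>(w, y)\<close> that is continuous in \<open>y\<close> restricts
  to a rational function of \<open>w\<close>. This function is even, so it is a rational function of
  \<open>t = w\<^sup>2\<close>. Taking its Taylor series, followed by \<open>t \<mapsto> t\<close> or by \<open>t \<mapsto> -t\<close>, gives two
  homomorphisms \<open>\<R>\<^sup>0(V) \<rightarrow> \<real>[[t]]\<close> with values in the algebraic Puiseux series.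
  Polynomials become polynomials in \<open>t\<^sup>2\<close> along the arc, so both homomorphisms extend the
  same homomorphism of \<open>\<real>[V]\<close>. However, they differ on \<open>\<surd>|z|\<close>, which equals \<open>x\<^sup>2/y\<^sup>2\<close> off
  \<open>y = 0\<close> and equals \<open>t\<close> along the arc.\<close>

section \<open>Power series as Puiseux series\<close>

definition ps_of_fps :: "real fps \<Rightarrow> rat \<Rightarrow> real" where
  "ps_of_fps S = (\<lambda>q. if (\<exists>k::nat. q = of_nat k) then fps_nth S (nat \<lfloor>q\<rfloor>) else 0)"

lemma ps_of_fps_of_nat [simp]: "ps_of_fps S (of_nat n) = fps_nth S n"
  by (auto simp: ps_of_fps_def)

lemma ps_of_fps_zero [simp]: "ps_of_fps S 0 = fps_nth S 0"
  using ps_of_fps_of_nat[of S 0] by simp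

lemma ps_of_fps_not_nat: "\<nexists>k::nat. q = of_nat k \<Longrightarrow> ps_of_fps S q = 0"
  by (auto simp: ps_of_fps_def)

lemma ps_of_poly_eq_ps_of_fps: "ps_of_poly p = ps_of_fps (fps_of_poly p)"
  by (auto simp: ps_of_poly_def ps_of_fps_def fps_of_poly_def)

lemma ps_const_eq_ps_of_fps: "ps_const c = ps_of_fps (fps_const c)"
proof
  fix q :: rat
  show "ps_const c q = ps_of_fps (fps_const c) q"
  proof (cases "\<exists>k::nat. q = of_nat k")
    case True
    then obtain k where "q = of_nat k" by blast
    then show ?thesis by (cases "k = 0") (auto simp: ps_const_def)
  next
    case False
    then have "q \<noteq> 0" by (metis of_nat_0)
    with False show ?thesis by (simp add: ps_const_def ps_of_fps_not_nat)
  qed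
qed

lemma ps_add_ps_of_fps: "ps_add (ps_of_fps A) (ps_of_fps B) = ps_of_fps (A + B)"
  by (auto simp: ps_add_def ps_of_fps_def)

lemma ps_mult_ps_of_fps: "ps_mult (ps_of_fps A) (ps_of_fps B) = ps_of_fps (A * B)"
proof
  fix q :: rat
  let ?T = "{a. ps_of_fps A a \<noteq> 0 \<and> ps_of_fps B (q - a) \<noteq> 0}"
  have support: "\<exists>i j::nat. a = of_nat i \<and> q = of_nat (i + j)" if "a \<in> ?T" for a
  proof -
    obtain i j :: nat where "a = of_nat i" "q - a = of_nat j"
      using \<open>a \<in> ?T\<close> ps_of_fps_not_nat by blast
    then show ?thesis by (intro exI[of _ i] exI[of _ j]) simp
  qed
  show "ps_mult (ps_of_fps A) (ps_of_fps B) q = ps_of_fps (A * B) q"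
  proof (cases "\<exists>n::nat. q = of_nat n")
    case False
    then have "?T = {}" using support by blast
    then have "ps_mult (ps_of_fps A) (ps_of_fps B) q = 0"
      unfolding ps_mult_def by (simp only: sum.empty)
    then show ?thesis using False by (simp add: ps_of_fps_not_nat)
  next
    case True
    then obtain n where n: "q = of_nat n" by blast
    have "?T \<subseteq> of_nat ` {0..n}"
      using support by (force simp: n)
    then have "ps_mult (ps_of_fps A) (ps_of_fps B) q =
        (\<Sum>a\<in>of_nat ` {0..n}. ps_of_fps A a * ps_of_fps B (q - a))"
      unfolding ps_mult_def by (intro sum.mono_neutral_left) auto
    also have "\<dots> = (\<Sum>i=0..n. fps_nth A i * fps_nth B (n - i))"
      by (subst sum.reindex) (auto simp: inj_on_def n intro!: sum.cong simp flip: of_nat_diff)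
    also have "\<dots> = ps_of_fps (A * B) q" by (simp add: n fps_mult_nth)
    finally show ?thesis .
  qed
qed

lemma ps_of_fps_in_alg_puiseux:
  assumes "fps_of_poly D * S = fps_of_poly N" "D \<noteq> 0"
  shows "ps_of_fps S \<in> alg_puiseux"
proof -
  have "is_puiseux (ps_of_fps S)"
    unfolding is_puiseux_def by (rule exI[of _ 1]) (auto simp: ps_of_fps_def)
  moreover have "ps_eval [:-N, D:] (ps_of_fps S) = ps_of_fps (fps_of_poly (-N) + fps_of_poly D * S)"
    using assms(2)
    by (simp add: ps_eval_def ps_of_poly_eq_ps_of_fps ps_const_eq_ps_of_fps ps_mult_ps_of_fps
        flip: ps_add_ps_of_fps) (simp add: ps_add_def)
  moreover have "ps_of_fps (fps_of_poly (-N) + fps_of_poly D * S) = (\<lambda>_. 0)"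
    using assms(1) by (auto simp: fps_of_poly_uminus ps_of_fps_def)
  ultimately show ?thesis
    using assms(2) unfolding alg_puiseux_def by (intro CollectI conjI exI[of _ "[:-N, D:]"]) auto
qed

lemma fps_of_poly_linear: "fps_of_poly [:0, c:] = fps_const (c :: 'a :: comm_semiring_1) * fps_X"
  by (simp add: fps_of_poly_pCons fps_of_poly_const fps_mult_fps_X_commute)

section \<open>Rational germs at 0 from the right\<close>

lemma poly_eq_if_eventually_eq_at_right:
  fixes p q :: "real poly"
  assumes "eventually (\<lambda>t. poly p t = poly q t) (at_right a)"
  shows "p = q"
proof (rule ccontr)
  assume "p \<noteq> q"
  then have "finite {t. poly (p - q) t = 0}" by (intro poly_roots_finite) simp
  moreover obtain b where "a < b" "\<forall>t>a. t < b \<longrightarrow> poly p t = poly q t"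
    using assms by (auto simp: eventually_at_right_field)
  then have "{a<..<b} \<subseteq> {t. poly (p - q) t = 0}" by auto
  ultimately show False using infinite_Ioo[OF \<open>a < b\<close>] finite_subset by blast
qed

lemma tendsto_poly_at_right: "(poly p \<longlongrightarrow> poly p a) (at_right a)"
  for p :: "real poly"
  using continuous_within_poly[of a "{a<..}" p] by (simp add: continuous_within)

lemma eventually_poly_nonzero_at_right:
  fixes p :: "real poly"
  assumes "coeff p 0 \<noteq> 0"
  shows "eventually (\<lambda>t. poly p t \<noteq> 0) (at_right 0)"
  using tendsto_poly_at_right[of p 0] assms
  by (intro tendsto_imp_eventually_ne) (auto simp: poly_0_coeff_0)

lemma poly_monom_decomp:
  fixes p :: "'a::idom poly"
  assumes "p \<noteq> 0"
  obtains k q where "p = monom 1 k * q" "coeff q 0 \<noteq> 0"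
proof -
  obtain q where "p = [:- 0, 1:] ^ order 0 p * q" "\<not> [:- 0, 1:] dvd q"
    using order_decomp[OF assms] by blast
  then show thesis
    using that[of "order 0 p" q] poly_eq_0_iff_dvd[of q 0]
    by (simp add: monom_altdef poly_0_coeff_0)
qed

lemma poly_monom_factor_at_right:
  fixes A :: "real poly"
  assumes "(C \<longlongrightarrow> c) (at_right 0)" "eventually (\<lambda>y. poly A y = y ^ k * C y) (at_right 0)"
  shows "\<exists>A1. A = monom 1 k * A1 \<and> poly A1 0 = c"
  using assms(2)
proof (induction k arbitrary: A)
  case 0
  then have "(poly A \<longlongrightarrow> c) (at_right 0)"
    using assms(1) by (simp add: tendsto_cong)
  then have "poly A 0 = c"
    using tendsto_unique[OF trivial_limit_at_right_real tendsto_poly_at_right] by blast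
  then show ?case by (intro exI[of _ A]) simp
next
  case (Suc k)
  have "((\<lambda>y. y ^ Suc k * C y) \<longlongrightarrow> 0 ^ Suc k * c) (at_right 0)"
    by (intro tendsto_intros assms(1))
  then have "(poly A \<longlongrightarrow> 0) (at_right 0)"
    using Suc.prems by (simp add: tendsto_cong)
  then have "poly A 0 = 0"
    using tendsto_unique[OF trivial_limit_at_right_real tendsto_poly_at_right] by blast
  then obtain A2 where A2: "A = [:0, 1:] * A2"
    using poly_eq_0_iff_dvd[of A 0] by (auto elim: dvdE)
  have "eventually (\<lambda>y. poly A2 y = y ^ k * C y) (at_right 0)"
    using Suc.prems eventually_at_right_less[of 0] by eventually_elim (simp add: A2)
  then obtain A1 where "A2 = monom 1 k * A1 \<and> poly A1 0 = c"
    using Suc.IH by blast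
  then show ?case
    by (intro exI[of _ A1]) (simp add: A2 monom_Suc)
qed

definition rational_right_germ :: "(real \<Rightarrow> real) \<Rightarrow> real fps \<Rightarrow> bool" where
  "rational_right_germ u S \<longleftrightarrow> (\<exists>N D. coeff D 0 \<noteq> 0 \<and> fps_of_poly D * S = fps_of_poly N \<and>
      eventually (\<lambda>t. u t = poly N t / poly D t) (at_right 0))"

lemma rational_right_germE:
  assumes "rational_right_germ u S"
  obtains N D where "coeff D 0 \<noteq> 0" "fps_of_poly D * S = fps_of_poly N"
    "eventually (\<lambda>t. poly D t \<noteq> 0 \<and> u t = poly N t / poly D t) (at_right 0)"
proof -
  obtain N D where ND: "coeff D 0 \<noteq> 0" "fps_of_poly D * S = fps_of_poly N"
    "eventually (\<lambda>t. u t = poly N t / poly D t) (at_right 0)"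
    using assms unfolding rational_right_germ_def by blast
  have "eventually (\<lambda>t. poly D t \<noteq> 0 \<and> u t = poly N t / poly D t) (at_right 0)"
    using eventually_poly_nonzero_at_right[OF ND(1)] ND(3) by (rule eventually_conj)
  with ND(1,2) show thesis by (rule that)
qed

lemma rational_right_germ_unique:
  assumes "rational_right_germ u S" "rational_right_germ u T"
  shows "S = T"
proof -
  obtain N D where ND: "coeff D 0 \<noteq> 0" "fps_of_poly D * S = fps_of_poly N"
    "eventually (\<lambda>t. poly D t \<noteq> 0 \<and> u t = poly N t / poly D t) (at_right 0)"
    using assms(1) by (rule rational_right_germE)
  obtain N' D' where ND': "coeff D' 0 \<noteq> 0" "fps_of_poly D' * T = fps_of_poly N'"
    "eventually (\<lambda>t. poly D' t \<noteq> 0 \<and> u t = poly N' t / poly D' t) (at_right 0)"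
    using assms(2) by (rule rational_right_germE)
  have "eventually (\<lambda>t. poly (N * D') t = poly (N' * D) t) (at_right 0)"
    using ND(3) ND'(3) by eventually_elim (auto simp: frac_eq_eq ac_simps)
  then have cross: "N * D' = N' * D" by (rule poly_eq_if_eventually_eq_at_right)
  have "fps_of_poly (D * D') * S = fps_of_poly D' * (fps_of_poly D * S)"
    by (simp add: fps_of_poly_mult ac_simps)
  also have "\<dots> = fps_of_poly D * (fps_of_poly D' * T)"
    using ND(2) ND'(2) cross by (simp add: fps_of_poly_mult ac_simps)
  finally have "fps_of_poly (D * D') * S = fps_of_poly (D * D') * T"
    by (simp add: fps_of_poly_mult ac_simps)
  moreover have "D * D' \<noteq> 0"
    using ND(1) ND'(1) by auto
  ultimately show ?thesis
    by (metis fps_of_poly_0 fps_of_poly_eq_iff mult_cancel_left)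
qed

lemma rational_right_germ_add:
  assumes "rational_right_germ u S" "rational_right_germ v T"
  shows "rational_right_germ (\<lambda>t. u t + v t) (S + T)"
proof -
  obtain N D where ND: "coeff D 0 \<noteq> 0" "fps_of_poly D * S = fps_of_poly N"
    "eventually (\<lambda>t. poly D t \<noteq> 0 \<and> u t = poly N t / poly D t) (at_right 0)"
    using assms(1) by (rule rational_right_germE)
  obtain N' D' where ND': "coeff D' 0 \<noteq> 0" "fps_of_poly D' * T = fps_of_poly N'"
    "eventually (\<lambda>t. poly D' t \<noteq> 0 \<and> v t = poly N' t / poly D' t) (at_right 0)"
    using assms(2) by (rule rational_right_germE)
  show ?thesis
    unfolding rational_right_germ_def
  proof (rule exI[of _ "N * D' + N' * D"], rule exI[of _ "D * D'"], intro conjI)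
    show "coeff (D * D') 0 \<noteq> 0" using ND(1) ND'(1) by (simp add: coeff_mult_0)
    show "fps_of_poly (D * D') * (S + T) = fps_of_poly (N * D' + N' * D)"
      using ND(2) ND'(2) by (simp add: fps_of_poly_mult fps_of_poly_add algebra_simps)
    show "eventually (\<lambda>t. u t + v t = poly (N * D' + N' * D) t / poly (D * D') t) (at_right 0)"
      using ND(3) ND'(3) by eventually_elim (simp add: field_simps)
  qed
qed

lemma rational_right_germ_mult:
  assumes "rational_right_germ u S" "rational_right_germ v T"
  shows "rational_right_germ (\<lambda>t. u t * v t) (S * T)"
proof -
  obtain N D where ND: "coeff D 0 \<noteq> 0" "fps_of_poly D * S = fps_of_poly N"
    "eventually (\<lambda>t. poly D t \<noteq> 0 \<and> u t = poly N t / poly D t) (at_right 0)"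
    using assms(1) by (rule rational_right_germE)
  obtain N' D' where ND': "coeff D' 0 \<noteq> 0" "fps_of_poly D' * T = fps_of_poly N'"
    "eventually (\<lambda>t. poly D' t \<noteq> 0 \<and> v t = poly N' t / poly D' t) (at_right 0)"
    using assms(2) by (rule rational_right_germE)
  show ?thesis
    unfolding rational_right_germ_def
  proof (rule exI[of _ "N * N'"], rule exI[of _ "D * D'"], intro conjI)
    show "coeff (D * D') 0 \<noteq> 0" using ND(1) ND'(1) by (simp add: coeff_mult_0)
    have "fps_of_poly (D * D') * (S * T) = (fps_of_poly D * S) * (fps_of_poly D' * T)"
      by (simp add: fps_of_poly_mult ac_simps)
    then show "fps_of_poly (D * D') * (S * T) = fps_of_poly (N * N')"
      using ND(2) ND'(2) by (simp add: fps_of_poly_mult)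
    show "eventually (\<lambda>t. u t * v t = poly (N * N') t / poly (D * D') t) (at_right 0)"
      using ND(3) ND'(3) by eventually_elim simp
  qed
qed

lemma rational_right_germ_poly:
  assumes "eventually (\<lambda>t. u t = poly P t) (at_right 0)"
  shows "rational_right_germ u (fps_of_poly P)"
  unfolding rational_right_germ_def using assms
  by (intro exI[of _ P] exI[of _ "1 :: real poly"]) simp

text \<open>Continuity from the right at 0 cancels the powers of \<open>t\<close> from the denominator.\<close>
lemma rational_right_germI:
  fixes N D :: "real poly"
  assumes "(u \<longlongrightarrow> u 0) (at_right 0)" "D \<noteq> 0"
    and "eventually (\<lambda>t. poly D t \<noteq> 0 \<longrightarrow> u t = poly N t / poly D t) (at_right 0)"
  shows "\<exists>S. rational_right_germ u S"
proof -
  obtain k D1 where D: "D = monom 1 k * D1" "coeff D1 0 \<noteq> 0"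
    using assms(2) by (rule poly_monom_decomp)
  have ev: "eventually (\<lambda>t. 0 < t \<and> poly D1 t \<noteq> 0 \<and> u t = poly N t / poly D t) (at_right 0)"
    using eventually_at_right_less[of 0] eventually_poly_nonzero_at_right[OF D(2)] assms(3)
    by eventually_elim (simp add: D poly_monom)
  have "eventually (\<lambda>t. poly N t = t ^ k * (u t * poly D1 t)) (at_right 0)"
    using ev by eventually_elim (simp add: D poly_monom)
  moreover have "((\<lambda>t. u t * poly D1 t) \<longlongrightarrow> u 0 * poly D1 0) (at_right 0)"
    by (intro tendsto_intros assms(1))
  ultimately obtain N1 where N: "N = monom 1 k * N1"
    using poly_monom_factor_at_right by blast
  have "rational_right_germ u (fps_of_poly N1 * inverse (fps_of_poly D1))"
    unfolding rational_right_germ_def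
  proof (rule exI[of _ N1], rule exI[of _ D1], intro conjI)
    show "coeff D1 0 \<noteq> 0" by fact
    then have "fps_of_poly D1 * inverse (fps_of_poly D1) = 1"
      by (intro inverse_mult_eq_1') simp
    then show "fps_of_poly D1 * (fps_of_poly N1 * inverse (fps_of_poly D1)) = fps_of_poly N1"
      by (simp add: mult.left_commute)
    show "eventually (\<lambda>t. u t = poly N1 t / poly D1 t) (at_right 0)"
      using ev by eventually_elim (simp add: D N poly_monom)
  qed
  then show ?thesis ..
qed

section \<open>Even rational functions\<close>

lemma poly_even_odd_decomp:
  fixes p :: "real poly"
  shows "\<exists>pe po. \<forall>x. poly p x = poly pe (x^2) + x * poly po (x^2)"
proof (induction p)
  case 0
  then show ?case by (intro exI[of _ 0]) simp
next
  case (pCons a p)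
  then obtain pe po where "\<forall>x. poly p x = poly pe (x^2) + x * poly po (x^2)" by blast
  then show ?case
    by (intro exI[of _ "pCons a po"] exI[of _ pe]) (simp add: algebra_simps power2_eq_square)
qed

lemma even_poly_eq_poly_square:
  fixes p :: "real poly"
  assumes "\<And>x. poly p (-x) = poly p x"
  shows "\<exists>q. \<forall>x. poly p x = poly q (x^2)"
proof -
  obtain pe po where p: "\<And>x. poly p x = poly pe (x^2) + x * poly po (x^2)"
    using poly_even_odd_decomp by blast
  have "poly p x = poly pe (x^2)" for x
    using p[of x] p[of "-x"] assms[of x] by simp
  then show ?thesis by blast
qed

lemma even_rational_function_of_square:
  fixes v :: "real \<Rightarrow> real" and a b :: "real poly"
  assumes "b \<noteq> 0" "\<And>w. v (-w) = v w" "\<And>w. poly b w \<noteq> 0 \<Longrightarrow> v w = poly a w / poly b w"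
  shows "\<exists>N D. D \<noteq> 0 \<and> (\<forall>w. poly D (w^2) \<noteq> 0 \<longrightarrow> v w = poly N (w^2) / poly D (w^2))"
proof -
  define a' b' where "a' = pcompose a [:0, -1:]" and "b' = pcompose b [:0, -1:]"
  have reflected: "poly a' w = poly a (-w)" "poly b' w = poly b (-w)" for w
    by (simp_all add: a'_def b'_def poly_pcompose)
  have "poly (a * b' + a' * b) (-w) = poly (a * b' + a' * b) w" for w
    by (simp add: reflected)
  then obtain N where N: "\<And>w. poly (a * b' + a' * b) w = poly N (w^2)"
    using even_poly_eq_poly_square by blast
  have "poly (smult 2 (b * b')) (-w) = poly (smult 2 (b * b')) w" for w
    by (simp add: reflected)
  then obtain D where D: "\<And>w. poly (smult 2 (b * b')) w = poly D (w^2)"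
    using even_poly_eq_poly_square by blast
  have "b' \<noteq> 0" using assms(1) by (simp add: b'_def pcompose_eq_0_iff)
  then obtain w0 where "poly (smult 2 (b * b')) w0 \<noteq> 0"
    using assms(1) poly_all_0_iff_0[of "smult 2 (b * b')"] by auto
  then have "D \<noteq> 0" by (metis D poly_0)
  moreover have "v w = poly N (w^2) / poly D (w^2)" if "poly D (w^2) \<noteq> 0" for w
  proof -
    have b: "poly b w \<noteq> 0" "poly b (-w) \<noteq> 0"
      using that D[of w] by (simp_all add: reflected) (metis mult_eq_0_iff)+
    have "v w * poly b w = poly a w"
      using assms(3)[OF b(1)] b(1) by simp
    moreover have "v w * poly b (-w) = poly a (-w)"
      using assms(3)[OF b(2)] assms(2)[of w] b(2) by simp
    ultimately have "poly a w = v w * poly b w" "poly a (-w) = v w * poly b (-w)"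
      by simp_all
    then have "poly N (w^2) = v w * poly D (w^2)"
      by (simp add: N[symmetric] D[symmetric] reflected algebra_simps)
    then show ?thesis using that by simp
  qed
  ultimately show ?thesis by blast
qed

section \<open>Bivariate polynomials\<close>

text \<open>\<open>H\<close> is a polynomial in \<open>y\<close> whose coefficients are polynomials in \<open>w\<close>.\<close>
definition poly2 :: "real poly poly \<Rightarrow> real \<Rightarrow> real \<Rightarrow> real" where
  "poly2 H w y = poly (poly H [:y:]) w"

lemma poly2_altdef: "poly2 H w y = poly (map_poly (\<lambda>c. poly c w) H) y"
  unfolding poly2_def by (induction H) (simp_all add: map_poly_pCons)

lemma poly2_mult [simp]: "poly2 (A * B) w y = poly2 A w y * poly2 B w y"
  by (simp add: poly2_def)

lemma poly2_monom [simp]: "poly2 (monom c k) w y = poly c w * y ^ k"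
  by (simp add: poly2_def poly_monom poly_power)

lemma poly2_0 [simp]: "poly2 0 w y = 0"
  by (simp add: poly2_def)

definition is_poly2 :: "(real \<Rightarrow> real \<Rightarrow> real) \<Rightarrow> bool" where
  "is_poly2 f \<longleftrightarrow> (\<exists>H. \<forall>w y. f w y = poly2 H w y)"

lemma is_poly2_const: "is_poly2 (\<lambda>w y. c)"
  unfolding is_poly2_def poly2_def by (intro exI[of _ "[:[:c:]:]"]) simp

lemma is_poly2_fst: "is_poly2 (\<lambda>w y. w)"
  unfolding is_poly2_def poly2_def by (intro exI[of _ "[:[:0, 1:]:]"]) simp

lemma is_poly2_snd: "is_poly2 (\<lambda>w y. y)"
  unfolding is_poly2_def poly2_def by (intro exI[of _ "[:0, 1:]"]) simp

lemma is_poly2_add: "is_poly2 f \<Longrightarrow> is_poly2 g \<Longrightarrow> is_poly2 (\<lambda>w y. f w y + g w y)"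
  unfolding is_poly2_def poly2_def by (metis poly_add)

lemma is_poly2_diff: "is_poly2 f \<Longrightarrow> is_poly2 g \<Longrightarrow> is_poly2 (\<lambda>w y. f w y - g w y)"
  unfolding is_poly2_def poly2_def by (metis poly_diff)

lemma is_poly2_mult: "is_poly2 f \<Longrightarrow> is_poly2 g \<Longrightarrow> is_poly2 (\<lambda>w y. f w y * g w y)"
  unfolding is_poly2_def poly2_def by (metis poly_mult)

lemma is_poly2_power: "is_poly2 f \<Longrightarrow> is_poly2 (\<lambda>w y. f w y ^ n)"
  by (induction n) (auto intro: is_poly2_const is_poly2_mult[of f "\<lambda>w y. f w y ^ _", simplified])

lemma is_poly2_sum:
  "finite S \<Longrightarrow> (\<And>i. i \<in> S \<Longrightarrow> is_poly2 (f i)) \<Longrightarrow> is_poly2 (\<lambda>w y. \<Sum>i\<in>S. f i w y)"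
  by (induction S rule: finite_induct)
    (auto intro: is_poly2_const is_poly2_add[of "f _" "\<lambda>w y. \<Sum>i\<in>_. f i w y", simplified])

lemma is_poly2_poly4:
  assumes "poly4 p" "is_poly2 X" "is_poly2 Y" "is_poly2 Z1" "is_poly2 Z2"
  shows "is_poly2 (\<lambda>w y. p (X w y, Y w y, Z1 w y, Z2 w y))"
proof -
  obtain c S where S: "finite S" and p: "\<forall>x y z1 z2. p (x, y, z1, z2) =
      (\<Sum>(i, j, k, l)\<in>S. c (i, j, k, l) * x ^ i * y ^ j * z1 ^ k * z2 ^ l)"
    using assms(1) unfolding poly4_def by blast
  have "is_poly2 (\<lambda>w y. \<Sum>(i, j, k, l)\<in>S.
      c (i, j, k, l) * X w y ^ i * Y w y ^ j * Z1 w y ^ k * Z2 w y ^ l)"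
    using S by (rule is_poly2_sum)
      (use assms(2-5) in \<open>auto intro!: is_poly2_mult is_poly2_power is_poly2_const\<close>)
  then show ?thesis using p by simp
qed

lemma continuous_on_poly4:
  assumes "poly4 p"
  shows "continuous_on UNIV p"
proof -
  obtain c S where "\<forall>x y z1 z2. p (x, y, z1, z2) =
      (\<Sum>(i, j, k, l)\<in>S. c (i, j, k, l) * x ^ i * y ^ j * z1 ^ k * z2 ^ l)"
    using assms unfolding poly4_def by blast
  then have "p =
      (\<lambda>(x, y, z1, z2). \<Sum>(i, j, k, l)\<in>S. c (i, j, k, l) * x ^ i * y ^ j * z1 ^ k * z2 ^ l)"
    by (auto simp: fun_eq_iff)
  moreover have "continuous_on UNIV
      (\<lambda>(x, y, z1, z2). \<Sum>(i, j, k, l)\<in>S. c (i, j, k, l) * x ^ i * y ^ j * z1 ^ k * z2 ^ l)"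
    unfolding case_prod_beta by (intro continuous_intros)
  ultimately show ?thesis by simp
qed

text \<open>The line \<open>y = 0\<close> may lie in the zero set of the denominator; continuity in \<open>y\<close> still
  recovers \<open>F w 0\<close> as a quotient of lowest-order coefficients in \<open>y\<close>.\<close>
lemma rational_restrict_to_axis:
  fixes F :: "real \<Rightarrow> real \<Rightarrow> real" and A B :: "real poly poly"
  assumes "\<And>w. (F w \<longlongrightarrow> F w 0) (at_right 0)" "B \<noteq> 0"
    and "\<And>w y. poly2 B w y \<noteq> 0 \<Longrightarrow> F w y * poly2 B w y = poly2 A w y"
  shows "\<exists>a b. b \<noteq> 0 \<and> (\<forall>w. poly b w \<noteq> 0 \<longrightarrow> F w 0 = poly a w / poly b w)"
proof -
  obtain k B' where B: "B = monom 1 k * B'" "coeff B' 0 \<noteq> 0"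
    using assms(2) by (rule poly_monom_decomp)
  have quot: "F w 0 = poly (coeff A k) w / poly (coeff B' 0) w"
    if b: "poly (coeff B' 0) w \<noteq> 0" for w
  proof -
    define Aw Bw where "Aw = map_poly (\<lambda>c. poly c w) A" and "Bw = map_poly (\<lambda>c. poly c w) B'"
    have Bw0: "coeff Bw 0 \<noteq> 0" using b by (simp add: Bw_def coeff_map_poly)
    have A: "poly2 A w y = y ^ k * (F w y * poly2 B' w y)" if "poly2 B' w y \<noteq> 0" "0 < y" for y
    proof -
      have "poly2 B w y = y ^ k * poly2 B' w y" by (simp add: B(1))
      with that assms(3)[of w y] show ?thesis by (simp add: ac_simps)
    qed
    have "eventually (\<lambda>y. poly Aw y = y ^ k * (F w y * poly Bw y)) (at_right 0)"
      using eventually_poly_nonzero_at_right[OF Bw0] eventually_at_right_less[of 0]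
      by eventually_elim (simp add: Aw_def Bw_def A flip: poly2_altdef)
    moreover have "((\<lambda>y. F w y * poly Bw y) \<longlongrightarrow> F w 0 * poly Bw 0) (at_right 0)"
      by (intro tendsto_intros assms(1))
    ultimately obtain A1 where A1: "Aw = monom 1 k * A1" "poly A1 0 = F w 0 * poly Bw 0"
      using poly_monom_factor_at_right by blast
    have "poly (coeff A k) w = coeff Aw k" by (simp add: Aw_def coeff_map_poly)
    also have "\<dots> = poly A1 0" by (simp add: A1(1) coeff_monom_mult poly_0_coeff_0)
    also have "\<dots> = F w 0 * poly (coeff B' 0) w"
      by (simp only: A1(2)) (simp add: Bw_def poly_0_coeff_0 coeff_map_poly)
    finally have "poly (coeff A k) w = F w 0 * poly (coeff B' 0) w" .
    then show ?thesis using b by simp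
  qed
  with B(2) show ?thesis by blast
qed

section \<open>The parametrisation of the hypersurface\<close>

lemma tendsto_at_right_compose_continuous_on:
  fixes \<gamma> :: "real \<Rightarrow> 'a::topological_space"
  assumes "continuous_on S g" "continuous_on UNIV \<gamma>" "range \<gamma> \<subseteq> S"
  shows "((\<lambda>s. g (\<gamma> s)) \<longlongrightarrow> g (\<gamma> a)) (at_right a)"
proof -
  have "continuous_on UNIV (\<lambda>s. g (\<gamma> s))"
    using assms by (rule continuous_on_compose2)
  then show ?thesis
    by (simp add: continuous_on_eq_continuous_at isCont_def filterlim_at_split)
qed

lemma tendsto_at_right_in_closure:
  fixes \<gamma> :: "real \<Rightarrow> 'a::topological_space"
  assumes "(\<gamma> \<longlongrightarrow> p) (at_right a)" "eventually (\<lambda>s. \<gamma> s \<in> A) (at_right a)"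
  shows "p \<in> closure A"
  using assms(2) by (intro Lim_in_closed_set[OF closed_closure _ _ assms(1)])
    (auto elim: eventually_mono intro: closure_subset[THEN subsetD])

lemma circle_half_angle:
  fixes m z1 z2 :: real
  assumes "m^2 = z1^2 + z2^2" "m + z1 > 0"
  shows "1 + (z2 / (m + z1))^2 = 2 * m / (m + z1)" "1 - (z2 / (m + z1))^2 = 2 * z1 / (m + z1)"
proof -
  have "(m + z1)^2 + z2^2 = (2 * m) * (m + z1)" "(m + z1)^2 - z2^2 = (2 * z1) * (m + z1)"
    using assms(1) by algebra+
  moreover have "1 + (z2 / (m + z1))^2 = ((m + z1)^2 + z2^2) / (m + z1)^2"
    "1 - (z2 / (m + z1))^2 = ((m + z1)^2 - z2^2) / (m + z1)^2"
    using assms(2) by (simp_all add: power_divide field_simps)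
  ultimately show "1 + (z2 / (m + z1))^2 = 2 * m / (m + z1)"
    "1 - (z2 / (m + z1))^2 = 2 * z1 / (m + z1)"
    using assms(2) by (simp_all add: power2_eq_square)
qed

text \<open>With \<open>b = l y\<close>, \<open>((1 - b\<^sup>2) / (1 + b\<^sup>2), 2 b / (1 + b\<^sup>2))\<close> runs over the unit circle, and
  \<open>x / y = w (1 + b\<^sup>2)\<close> is a fourth root of \<open>z\<^sub>1\<^sup>2 + z\<^sub>2\<^sup>2\<close>.\<close>
definition V_param :: "real \<Rightarrow> real \<Rightarrow> real \<Rightarrow> pt4" where
  "V_param l w y = (w * (1 + (l * y)^2) * y, y, w^4 * (1 + (l * y)^2)^3 * (1 - (l * y)^2),
      w^4 * (1 + (l * y)^2)^3 * (2 * l * y))"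

lemma V_param_in_V_ex: "V_param l w y \<in> V_ex"
proof -
  define b where "b = l * y"
  have "(w * (1 + b^2) * y) ^ 8 =
      ((w^4 * (1 + b^2)^3 * (1 - b^2))^2 + (w^4 * (1 + b^2)^3 * (2 * b))^2) * y ^ 8"
    by algebra
  then show ?thesis by (simp add: V_param_def V_ex_def b_def mult.assoc)
qed

lemma continuous_on_V_param: "continuous_on UNIV (V_param l w)"
  unfolding V_param_def by (intro continuous_intros)

lemma V_param_axis: "V_param l w 0 = (0, 0, w^4, 0)"
  by (simp add: V_param_def)

lemma is_poly2_poly4_V_param:
  assumes "poly4 p"
  shows "\<exists>H. \<forall>w y. p (V_param l w y) = poly2 H w y"
proof -
  have "is_poly2 (\<lambda>w y. p (w * (1 + (l * y)^2) * y, y, w^4 * (1 + (l * y)^2)^3 * (1 - (l * y)^2),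
      w^4 * (1 + (l * y)^2)^3 * (2 * l * y)))"
    by (intro is_poly2_poly4 assms is_poly2_mult is_poly2_add is_poly2_diff is_poly2_power
        is_poly2_const is_poly2_fst is_poly2_snd)
  then show ?thesis unfolding is_poly2_def V_param_def .
qed

lemma V_param_onto:
  assumes V: "(x, y, z1, z2) \<in> V_ex" and "y \<noteq> 0" and "z2 \<noteq> 0 \<or> 0 \<le> z1"
  shows "(x, y, z1, z2) \<in> range (\<lambda>(l, w, y). V_param l w y)"
proof -
  define u m where "u = x / y" and "m = sqrt (z1^2 + z2^2)"
  have m2: "m^2 = z1^2 + z2^2" by (simp add: m_def)
  have "(u^4)^2 = m^2"
    using V \<open>y \<noteq> 0\<close> by (simp add: V_ex_def u_def m2 power_divide flip: power_mult)
  moreover have "0 \<le> u^4" "0 \<le> m" by (simp_all add: m_def zero_le_even_power)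
  ultimately have u4: "u^4 = m" using power2_eq_iff_nonneg by blast
  show ?thesis
  proof (cases "m = 0")
    case True
    then have "z1 = 0" "z2 = 0" "x = 0"
      using m2 u4 \<open>y \<noteq> 0\<close> by (auto simp: u_def m_def)
    then have "V_param 0 0 y = (x, y, z1, z2)" by (simp add: V_param_def)
    then show ?thesis by (auto intro!: image_eqI[where x = "(0, 0, y)"])
  next
    case False
    have mz: "m + z1 > 0"
    proof (cases "z2 = 0")
      case True
      then show ?thesis using assms(3) False \<open>0 \<le> m\<close> by simp
    next
      case False
      then have "(- z1)^2 < m^2" using m2 by simp
      then have "- z1 < m" using \<open>0 \<le> m\<close> by (rule power2_less_imp_less)
      then show ?thesis by simp
    qed
    define b where "b = z2 / (m + z1)"
    have b1: "1 + b^2 = 2 * m / (m + z1)" and b2: "1 - b^2 = 2 * z1 / (m + z1)"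
      using circle_half_angle[OF m2 mz] by (simp_all add: b_def)
    define w where "w = u / (1 + b^2)"
    have "1 + b^2 \<noteq> 0" by (metis add_pos_nonneg less_irrefl zero_le_power2 zero_less_one)
    then have w1: "w * (1 + b^2) = u" by (simp add: w_def)
    have "w^4 * (1 + b^2)^3 * (1 + b^2) = m"
      unfolding u4[symmetric] w1[symmetric] by algebra
    then have "w^4 * (1 + b^2)^3 * (2 * m / (m + z1)) = m"
      by (simp only: b1)
    then have w3: "w^4 * (1 + b^2)^3 = (m + z1) / 2"
      using mz False by (simp add: field_simps) (metis distrib_left mult_left_cancel)
    have "(m + z1) * b = z2" using mz by (simp add: b_def)
    then have "V_param (b / y) w y = (x, y, z1, z2)"
      using \<open>y \<noteq> 0\<close> mz by (simp add: V_param_def w1 w3 b2 u_def)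
    then show ?thesis by (auto intro!: image_eqI[where x = "(b / y, w, y)"])
  qed
qed

lemma off_axis_in_closure_V_param:
  assumes V: "(x, y, z1, z2) \<in> V_ex" and "y \<noteq> 0"
  shows "(x, y, z1, z2) \<in> closure (range (\<lambda>(l, w, y). V_param l w y))"
proof (cases "z2 \<noteq> 0 \<or> 0 \<le> z1")
  case True
  show ?thesis by (rule subsetD[OF closure_subset V_param_onto[OF V \<open>y \<noteq> 0\<close> True]])
next
  case False
  define \<gamma> where "\<gamma> = (\<lambda>s. (x, y, z1 * cos s, z1 * sin s))"
  have "(\<gamma> \<longlongrightarrow> \<gamma> 0) (at_right 0)" unfolding \<gamma>_def by (intro tendsto_intros)
  moreover have "eventually (\<lambda>s. \<gamma> s \<in> range (\<lambda>(l, w, y). V_param l w y)) (at_right 0)"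
    using eventually_at_right_real[OF pi_gt_zero]
  proof eventually_elim
    case (elim s)
    then have "z1 * sin s \<noteq> 0" using False sin_gt_zero[of s] by simp
    moreover have "(x, y, z1 * cos s, z1 * sin s) \<in> V_ex"
      using V False by (simp add: V_ex_def power_mult_distrib flip: distrib_left)
    ultimately show ?case unfolding \<gamma>_def using \<open>y \<noteq> 0\<close> by (intro V_param_onto) auto
  qed
  ultimately have "\<gamma> 0 \<in> closure (range (\<lambda>(l, w, y). V_param l w y))"
    by (rule tendsto_at_right_in_closure)
  moreover have "\<gamma> 0 = (x, y, z1, z2)" using False by (simp add: \<gamma>_def)
  ultimately show ?thesis by simp
qed

lemma V_ex_subset_closure_V_param: "V_ex \<subseteq> closure (range (\<lambda>(l, w, y). V_param l w y))"
proof clarify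
  let ?P = "range (\<lambda>(l, w, y). V_param l w y)"
  fix x y z1 z2 assume V: "(x, y, z1, z2) \<in> V_ex"
  show "(x, y, z1, z2) \<in> closure ?P"
  proof (cases "y = 0")
    case False
    then show ?thesis using off_axis_in_closure_V_param V by blast
  next
    case True
    then have "x = 0" using V by (simp add: V_ex_def)
    define \<rho> where "\<rho> = root 8 (z1^2 + z2^2)"
    have \<rho>: "\<rho>^8 = z1^2 + z2^2" by (simp add: \<rho>_def)
    define \<gamma> where "\<gamma> = (\<lambda>s. (\<rho> * s, s, z1, z2))"
    have "(\<gamma> \<longlongrightarrow> \<gamma> 0) (at_right 0)" unfolding \<gamma>_def by (intro tendsto_intros)
    moreover have "eventually (\<lambda>s. \<gamma> s \<in> closure ?P) (at_right 0)"
      using eventually_at_right_less[of 0]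
    proof eventually_elim
      case (elim s)
      have "(\<rho> * s, s, z1, z2) \<in> V_ex" by (simp add: V_ex_def power_mult_distrib \<rho>)
      with elim show ?case unfolding \<gamma>_def by (intro off_axis_in_closure_V_param) simp_all
    qed
    ultimately have "\<gamma> 0 \<in> closure (closure ?P)" by (rule tendsto_at_right_in_closure)
    then show ?thesis using True \<open>x = 0\<close> by (simp add: \<gamma>_def)
  qed
qed

lemma zariski_open_meets_V_param:
  assumes "zariski_open_in V_ex U" "U \<noteq> {}"
  obtains h l w y where "poly4 h" "h (V_param l w y) \<noteq> 0" "\<And>x. x \<in> V_ex \<Longrightarrow> h x \<noteq> 0 \<Longrightarrow> x \<in> U"
proof -
  obtain P where P: "\<forall>h\<in>P. poly4 h" "U = V_ex - {x. \<forall>h\<in>P. h x = 0}"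
    using assms(1) unfolding zariski_open_in_def by blast
  then obtain x0 h where h: "x0 \<in> V_ex" "h \<in> P" "h x0 \<noteq> 0"
    using assms(2) by blast
  have "\<not> (\<forall>l w y. h (V_param l w y) = 0)"
  proof
    assume "\<forall>l w y. h (V_param l w y) = 0"
    then have "range (\<lambda>(l, w, y). V_param l w y) \<subseteq> {x. h x = 0}" by auto
    moreover have "closed {x. h x = 0}"
      using continuous_closed_preimage_constant[OF continuous_on_poly4 closed_UNIV, of h 0]
        P(1) h(2)
      by simp
    ultimately have "closure (range (\<lambda>(l, w, y). V_param l w y)) \<subseteq> {x. h x = 0}"
      by (rule closure_minimal)
    then show False using V_ex_subset_closure_V_param h(1,3) by auto
  qed
  then obtain l w y where "h (V_param l w y) \<noteq> 0" by blast
  moreover have "x \<in> U" if "x \<in> V_ex" "h x \<noteq> 0" for x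
    using that P(2) h(2) by auto
  ultimately show thesis using P(1) h(2) that by blast
qed

lemma cont_rat_on_axis:
  assumes "g \<in> cont_rat V_ex"
  shows "\<exists>a b. b \<noteq> 0 \<and> (\<forall>w. poly b w \<noteq> 0 \<longrightarrow> g (0, 0, w^4, 0) = poly a w / poly b w)"
proof -
  obtain U p q where g: "continuous_on V_ex g" "zariski_open_in V_ex U" "U \<noteq> {}" "poly4 p" "poly4 q"
    "\<forall>x\<in>U. q x \<noteq> 0 \<and> g x = p x / q x"
    using assms unfolding cont_rat_def by blast
  obtain h l w1 y1 where h: "poly4 h" "h (V_param l w1 y1) \<noteq> 0"
    "\<And>x. x \<in> V_ex \<Longrightarrow> h x \<noteq> 0 \<Longrightarrow> x \<in> U"
    using zariski_open_meets_V_param[OF g(2,3)] by blast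
  obtain Hp Hq Hh where H: "\<And>w y. p (V_param l w y) = poly2 Hp w y"
    "\<And>w y. q (V_param l w y) = poly2 Hq w y" "\<And>w y. h (V_param l w y) = poly2 Hh w y"
    using is_poly2_poly4_V_param[OF g(4)] is_poly2_poly4_V_param[OF g(5)]
      is_poly2_poly4_V_param[OF h(1)] by metis
  have quot: "g (V_param l w y) * poly2 (Hq * Hh) w y = poly2 (Hp * Hh) w y"
    if "poly2 (Hq * Hh) w y \<noteq> 0" for w y
  proof -
    have "V_param l w y \<in> U" using that h(3) V_param_in_V_ex by (simp add: H)
    then have "q (V_param l w y) \<noteq> 0" "g (V_param l w y) = p (V_param l w y) / q (V_param l w y)"
      using g(6) by auto
    then show ?thesis by (simp add: H)
  qed
  have "V_param l w1 y1 \<in> U" using h(2,3) V_param_in_V_ex by blast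
  then have "q (V_param l w1 y1) \<noteq> 0" using g(6) by blast
  then have "poly2 (Hq * Hh) w1 y1 \<noteq> 0" using h(2) by (simp add: H)
  then have "Hq * Hh \<noteq> 0" by auto
  moreover have "((\<lambda>y. g (V_param l w y)) \<longlongrightarrow> g (V_param l w 0)) (at_right 0)" for w
    using V_param_in_V_ex
    by (intro tendsto_at_right_compose_continuous_on[OF g(1) continuous_on_V_param]) blast
  ultimately have "\<exists>a b. b \<noteq> 0 \<and>
      (\<forall>w. poly b w \<noteq> 0 \<longrightarrow> g (V_param l w 0) = poly a w / poly b w)"
    using quot by (intro rational_restrict_to_axis)
  then obtain a b where "b \<noteq> 0" "\<And>w. poly b w \<noteq> 0 \<Longrightarrow> g (V_param l w 0) = poly a w / poly b w"
    by blast
  then show ?thesis by (auto simp: V_param_axis)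
qed

section \<open>Expansion along an arc in the singular line\<close>

definition axis_arc :: "real \<Rightarrow> pt4" where
  "axis_arc t = (0, 0, t^2, 0)"

lemma axis_arc_in_V_ex: "axis_arc t \<in> V_ex"
  by (simp add: axis_arc_def V_ex_def)

lemma cont_rat_axis_arc_germ:
  assumes "g \<in> cont_rat V_ex"
  shows "\<exists>S. rational_right_germ (\<lambda>t. g (axis_arc t)) S"
proof -
  obtain a b where "b \<noteq> 0" "\<And>w. poly b w \<noteq> 0 \<Longrightarrow> g (0, 0, w^4, 0) = poly a w / poly b w"
    using cont_rat_on_axis[OF assms] by blast
  moreover have "g (0, 0, (-w)^4, 0) = g (0, 0, w^4, 0)" for w by simp
  ultimately have "\<exists>N D. D \<noteq> 0 \<and>
      (\<forall>w. poly D (w^2) \<noteq> 0 \<longrightarrow> g (0, 0, w^4, 0) = poly N (w^2) / poly D (w^2))"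
    by (intro even_rational_function_of_square)
  then obtain N D where "D \<noteq> 0"
    and ND: "\<And>w. poly D (w^2) \<noteq> 0 \<Longrightarrow> g (0, 0, w^4, 0) = poly N (w^2) / poly D (w^2)"
    by blast
  have pos: "poly D t \<noteq> 0 \<longrightarrow> g (axis_arc t) = poly N t / poly D t" if "0 < t" for t
  proof -
    have "sqrt t ^ 4 = (sqrt t ^ 2) ^ 2" by algebra
    then have "sqrt t ^ 4 = t ^ 2" using that by simp
    then show ?thesis using ND[of "sqrt t"] that by (simp add: axis_arc_def)
  qed
  have ev: "eventually (\<lambda>t. poly D t \<noteq> 0 \<longrightarrow> g (axis_arc t) = poly N t / poly D t) (at_right 0)"
    using eventually_at_right_less[of 0] by (rule eventually_mono) (rule pos)
  have "continuous_on V_ex g" using assms by (simp add: cont_rat_def)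
  then have "((\<lambda>t. g (axis_arc t)) \<longlongrightarrow> g (axis_arc 0)) (at_right 0)"
  proof (rule tendsto_at_right_compose_continuous_on)
    show "continuous_on UNIV axis_arc" unfolding axis_arc_def by (intro continuous_intros)
    show "range axis_arc \<subseteq> V_ex" using axis_arc_in_V_ex by blast
  qed
  then show ?thesis using \<open>D \<noteq> 0\<close> ev by (rule rational_right_germI)
qed

definition axis_arc_series :: "(pt4 \<Rightarrow> real) \<Rightarrow> real fps" where
  "axis_arc_series f = (THE S. rational_right_germ (\<lambda>t. f (axis_arc t)) S)"

lemma axis_arc_series_eqI: "rational_right_germ (\<lambda>t. f (axis_arc t)) S \<Longrightarrow> axis_arc_series f = S"
  unfolding axis_arc_series_def by (blast intro: the_equality rational_right_germ_unique)

definition axis_arc_ps :: "real \<Rightarrow> (pt4 \<Rightarrow> real) \<Rightarrow> rat \<Rightarrow> real" where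
  "axis_arc_ps c f = ps_of_fps (axis_arc_series f oo (fps_const c * fps_X))"

lemma ps_of_fps_scaled_germ_in_alg_puiseux:
  assumes "rational_right_germ u S"
  shows "ps_of_fps (S oo (fps_const c * fps_X)) \<in> alg_puiseux"
proof -
  obtain N D where ND: "coeff D 0 \<noteq> 0" "fps_of_poly D * S = fps_of_poly N"
    using assms by (rule rational_right_germE)
  have "fps_of_poly (pcompose D [:0, c:]) * (S oo (fps_const c * fps_X)) =
      fps_of_poly (pcompose N [:0, c:])"
    using ND(2)
    by (simp add: fps_of_poly_pcompose fps_of_poly_linear flip: fps_compose_mult_distrib)
  moreover have "pcompose D [:0, c:] \<noteq> 0"
    using ND(1) by (metis coeff_0 poly_0_coeff_0 poly_pcompose poly_pCons mult_zero_left add_0)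
  ultimately show ?thesis by (rule ps_of_fps_in_alg_puiseux)
qed

lemma alg_hom_into_ps_axis_arc_ps:
  assumes "\<And>f. f \<in> A \<Longrightarrow> \<exists>S. rational_right_germ (\<lambda>t. f (axis_arc t)) S"
  shows "alg_hom_into_ps V_ex A (axis_arc_ps c)"
proof -
  have germ: "rational_right_germ (\<lambda>t. f (axis_arc t)) (axis_arc_series f)" if "f \<in> A" for f
    using assms[OF that] axis_arc_series_eqI by blast
  have add: "axis_arc_series (\<lambda>x. f x + g x) = axis_arc_series f + axis_arc_series g"
    if "f \<in> A" "g \<in> A" for f g
    using rational_right_germ_add[OF germ germ] that by (intro axis_arc_series_eqI)
  have mult: "axis_arc_series (\<lambda>x. f x * g x) = axis_arc_series f * axis_arc_series g"
    if "f \<in> A" "g \<in> A" for f g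
    using rational_right_germ_mult[OF germ germ] that by (intro axis_arc_series_eqI)
  have const: "axis_arc_series (fconst V_ex a) = fps_const a" for a
    using rational_right_germ_poly[of _ "[:a:]"]
    by (intro axis_arc_series_eqI) (simp add: fconst_def axis_arc_in_V_ex fps_of_poly_const)
  have "ps_of_fps (axis_arc_series f oo (fps_const c * fps_X)) \<in> alg_puiseux" if "f \<in> A" for f
    using germ[OF that] by (rule ps_of_fps_scaled_germ_in_alg_puiseux)
  with add mult const show ?thesis
    unfolding alg_hom_into_ps_def axis_arc_ps_def
    by (simp add: ps_add_ps_of_fps ps_mult_ps_of_fps ps_const_eq_ps_of_fps fps_compose_add_distrib
        fps_compose_mult_distrib)
qed

lemma poly4_along_axis_arc:
  assumes "poly4 p"
  shows "\<exists>P. \<forall>t. p (axis_arc t) = poly P t"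
proof -
  have "is_poly2 (\<lambda>w y. p (0, 0, w^2, 0))"
    by (intro is_poly2_poly4 assms is_poly2_power is_poly2_const is_poly2_fst)
  then obtain H where "\<And>w. p (0, 0, w^2, 0) = poly2 H w 0" unfolding is_poly2_def by blast
  then show ?thesis
    by (intro exI[of _ "coeff H 0"]) (simp add: axis_arc_def poly2_def poly_0_coeff_0)
qed

lemma coord_ring_axis_arc_germ:
  assumes "f \<in> coord_ring V_ex"
  shows "\<exists>P. rational_right_germ (\<lambda>t. f (axis_arc t)) (fps_of_poly P) \<and> pcompose P [:0, -1:] = P"
proof -
  obtain p where p: "poly4 p" "\<forall>x\<in>V_ex. f x = p x"
    using assms unfolding coord_ring_def by blast
  obtain P where "\<And>t. p (axis_arc t) = poly P t"
    using poly4_along_axis_arc[OF p(1)] by blast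
  then have P: "f (axis_arc t) = poly P t" for t
    using p(2) axis_arc_in_V_ex by simp
  have "rational_right_germ (\<lambda>t. f (axis_arc t)) (fps_of_poly P)"
    by (rule rational_right_germ_poly) (simp add: P)
  moreover have "pcompose P [:0, -1:] = P"
    by (rule poly_ext) (simp add: poly_pcompose flip: P, simp add: axis_arc_def)
  ultimately show ?thesis by blast
qed

lemma axis_arc_ps_reflect_coord_ring:
  assumes "f \<in> coord_ring V_ex"
  shows "axis_arc_ps (-1) f = axis_arc_ps 1 f"
proof -
  obtain P where "rational_right_germ (\<lambda>t. f (axis_arc t)) (fps_of_poly P)"
    "pcompose P [:0, -1:] = P"
    using coord_ring_axis_arc_germ[OF assms] by blast
  then show ?thesis
    using fps_of_poly_pcompose[of "[:0, -1:]" P]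
    by (simp add: axis_arc_ps_def axis_arc_series_eqI fps_of_poly_linear)
qed

definition sqrt_norm_z :: "pt4 \<Rightarrow> real" where
  "sqrt_norm_z v = (if v \<in> V_ex then sqrt (norm (snd (snd v))) else 0)"

lemma poly4_monom: "poly4 (\<lambda>(x, y, z1, z2). x ^ i * y ^ j * z1 ^ k * z2 ^ l)"
  unfolding poly4_def by (intro exI[of _ "\<lambda>_. 1"] exI[of _ "{(i, j, k, l)}"]) simp

lemma sqrt_sqrt_power4: "sqrt (sqrt (u ^ 4)) = \<bar>u\<bar>"
proof -
  have "u ^ 4 = (u ^ 2) ^ 2" by algebra
  then show ?thesis by (simp only: real_sqrt_abs abs_power2)
qed

lemma sqrt_norm_z_cont_rat: "sqrt_norm_z \<in> cont_rat V_ex"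
proof -
  define U where "U = V_ex - {v. \<forall>p\<in>{\<lambda>(x, y, z1, z2). y}. p v = 0}"
  define p q :: "pt4 \<Rightarrow> real" where "p = (\<lambda>(x, y, z1, z2). x^2)" and "q = (\<lambda>(x, y, z1, z2). y^2)"
  have "poly4 (\<lambda>(x, y, z1, z2). y)" "poly4 p" "poly4 q"
    using poly4_monom[of 0 1 0 0] poly4_monom[of 2 0 0 0] poly4_monom[of 0 2 0 0]
    by (simp_all add: p_def q_def)
  moreover have "zariski_open_in V_ex U"
    using calculation(1) unfolding zariski_open_in_def U_def by blast
  moreover have "(1, 1, 1, 0) \<in> U" by (simp add: U_def V_ex_def)
  moreover have "\<forall>v\<in>U. q v \<noteq> 0 \<and> sqrt_norm_z v = p v / q v"
  proof
    fix v assume "v \<in> U"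
    obtain x y z1 z2 where v: "v = (x, y, z1, z2)" by (cases v)
    then have "v \<in> V_ex" "x ^ 8 = (z1^2 + z2^2) * y ^ 8" "y \<noteq> 0"
      using \<open>v \<in> U\<close> by (auto simp: U_def V_ex_def)
    then have "z1^2 + z2^2 = (x^2 / y^2) ^ 4"
      by (simp add: power_divide field_simps flip: power_mult)
    then have "sqrt (norm (z1, z2)) = x^2 / y^2"
      by (simp add: norm_Pair sqrt_sqrt_power4)
    then show "q v \<noteq> 0 \<and> sqrt_norm_z v = p v / q v"
      using v \<open>v \<in> V_ex\<close> \<open>y \<noteq> 0\<close> by (simp add: sqrt_norm_z_def p_def q_def)
  qed
  moreover have "continuous_on V_ex sqrt_norm_z"
  proof (rule continuous_on_cong[THEN iffD1])
    show "continuous_on V_ex (\<lambda>v. sqrt (norm (snd (snd v))))" by (intro continuous_intros)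
  qed (simp_all add: sqrt_norm_z_def)
  moreover have "\<forall>v. v \<notin> V_ex \<longrightarrow> sqrt_norm_z v = 0" by (simp add: sqrt_norm_z_def)
  ultimately show ?thesis unfolding cont_rat_def by blast
qed

lemma axis_arc_series_sqrt_norm_z: "axis_arc_series sqrt_norm_z = fps_X"
proof (rule axis_arc_series_eqI)
  have pos: "sqrt_norm_z (axis_arc t) = poly [:0, 1:] t" if "0 < t" for t
    using that axis_arc_in_V_ex[of t]
    by (simp add: sqrt_norm_z_def axis_arc_def norm_Pair sqrt_sqrt_power4 flip: power_mult)
  have "eventually (\<lambda>t. sqrt_norm_z (axis_arc t) = poly [:0, 1:] t) (at_right 0)"
    using eventually_at_right_less[of 0] by (rule eventually_mono) (rule pos)
  then show "rational_right_germ (\<lambda>t. sqrt_norm_z (axis_arc t)) fps_X"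
    using rational_right_germ_poly by fastforce
qed

lemma axis_arc_ps_sqrt_norm_z: "axis_arc_ps c sqrt_norm_z 1 = c"
  using ps_of_fps_of_nat[of _ 1] by (simp add: axis_arc_ps_def axis_arc_series_sqrt_norm_z)

theorem theorem4p7:
  shows "\<not> substitution_property V_ex"
proof
  assume "substitution_property V_ex"
  moreover have "alg_hom_into_ps V_ex (coord_ring V_ex) (axis_arc_ps 1)"
    using coord_ring_axis_arc_germ by (intro alg_hom_into_ps_axis_arc_ps) blast
  moreover have "alg_hom_into_ps V_ex (cont_rat V_ex) (axis_arc_ps c)" for c
    using cont_rat_axis_arc_germ by (rule alg_hom_into_ps_axis_arc_ps)
  moreover have "\<forall>f\<in>coord_ring V_ex. axis_arc_ps (-1) f = axis_arc_ps 1 f"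
    using axis_arc_ps_reflect_coord_ring by blast
  ultimately have "axis_arc_ps 1 sqrt_norm_z = axis_arc_ps (-1) sqrt_norm_z"
    using sqrt_norm_z_cont_rat unfolding substitution_property_def by blast
  then show False
    using axis_arc_ps_sqrt_norm_z[of 1] axis_arc_ps_sqrt_norm_z[of "-1"] by simp
qed

end
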